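(* Let $\mathcal{A}=(Q,\Sigma,q_I,\delta,\Omega,\mathrm{Cst})$ be a parity automaton with costs. Let $(\rho_j^1)_{j\in\mathbb{N}}$ and $(\rho_j^2)_{j\in\mathbb{N}}$ be sequences of non-empty finite runs of $\mathcal{A}$ such that, for every $j$, $\rho_j^1$ and $\rho_j^2$ have the same type, and such that $\sup_j |\rho_j^2| = d<\infty$ (where $|\rho|$ is the number of transitions of $\rho$). Suppose that $\rho'=\rho_0^1\rho_1^1\rho_2^1\cdots$ is an infinite run (i.e., each $\rho_j^1$ ends in the state in which $\rho_{j+1}^1$ starts), and let $\rho''=\rho_0^2\rho_1^2\rho_2^2\cdots$. If $\limsup_{n\to\infty}\mathrm{Cor}(\rho',n)\le b$ for some $b\in\mathbb{N}$, then $\limsup_{n\to\infty}\mathrm{Cor}(\rho'',n)\le (b+2)\cdot d$. In particular, if $\rho'$ is accepting, then $\rho''$ is accepting as well.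
   Context: A parity automaton with costs is a tuple $\mathcal{A}=(Q,\Sigma,q_I,\delta,\Omega,\mathrm{Cst})$ with a finite set $Q$ of states, a finite alphabet $\Sigma$, an initial state $q_I\in Q$, a deterministic complete transition function $\delta\colon Q\times\Sigma\to Q$ (also viewed as the set of transitions $(q,a,\delta(q,a))$), a coloring $\Omega\colon Q\to\mathbb{N}$, and a cost function $\mathrm{Cst}$ assigning to every transition either $\epsilon$ or $\mathtt{i}$ (the latter are called increment-transitions). Throughout, $\Omega(Q)$ contains both an even and an odd color. A run from $q_0$ on $a_0a_1\cdots$ is the sequence of transitions $(q_0,a_0,q_1)(q_1,a_1,q_2)\cdots$ with $q_{j+1}=\delta(q_j,a_j)$; the cost of a finite run is its number of increment-transitions. For odd $c$, let $\mathrm{Ans}(c)=\{c'\in\Omega(Q)\mid c'>c,\ c'\text{ even}\}$. For an infinite run $\rho=(q_0,a_0,q_1)(q_1,a_1,q_2)\cdots$ and $n\in\mathbb{N}$, $\mathrm{Cor}(\rho,n)=0$ if $\Omega(q_n)$ is even, and otherwise $\mathrm{Cor}(\rho,n)$ is the minimum of the costs of $(q_n,a_n,q_{n+1})\cdots(q_{n'-1},a_{n'-1},q_{n'})$ over all $n'>n$ with $\Omega(q_{n'})\in\mathrm{Ans}(\Omega(q_n))$, with $\min\emptyset=\infty$. An infinite run $\rho$ is accepting if $\limsup_{n\to\infty}\mathrm{Cor}(\rho,n)<\infty$. The type of a non-empty finite run $(q_0,a_0,q_1)\cdots(q_{n-1},a_{n-1},q_n)$ is the tuple $(q_0,q_n,c_0,c_1,\ell)$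 where (with $\max\emptyset=\bot$) $c_0=\max\{\Omega(q_j)\mid 0\le j\le n,\ \Omega(q_j)\text{ even}\}$, $c_1=\max\{\Omega(q_j)\mid 0\le j\le n,\ \Omega(q_j)\text{ odd},\ \Omega(q_{j'})\notin\mathrm{Ans}(\Omega(q_j))\text{ for all }j<j'\le n\}$ (the maximal unanswered request), and $\ell=\mathtt{i}$ iff the run contains an increment-transition, $\ell=\epsilon$ otherwise. *)

theory Defs
  imports Main "HOL-Library.Extended_Nat" "HOL-Library.Liminf_Limsup"
begin

text \<open>States are a finite type 'q, letters a finite
 type 'a; the deterministic complete transition function is delta, colouring Omega,
 and Cst assigns a cost (Eps or Inc) to each transition (q, a, delta q a).\<close>

datatype cost = Eps | Inc

type_synonym ('q,'a) trans = "'q \<times> 'a \<times> 'q"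

definition src :: "('q,'a) trans \<Rightarrow> 'q" where "src t = fst t"
definition tgt :: "('q,'a) trans \<Rightarrow> 'q" where "tgt t = snd (snd t)"
definition lbl :: "('q,'a) trans \<Rightarrow> 'a" where "lbl t = fst (snd t)"

definition is_trans :: "('q \<Rightarrow> 'a \<Rightarrow> 'q) \<Rightarrow> ('q,'a) trans \<Rightarrow> bool" where
  "is_trans delta t \<longleftrightarrow> tgt t = delta (src t) (lbl t)"

definition is_incr :: "('q \<Rightarrow> 'a \<Rightarrow> cost) \<Rightarrow> ('q,'a) trans \<Rightarrow> bool" where
  "is_incr Cst t \<longleftrightarrow> Cst (src t) (lbl t) = Inc"

definition colours_ok :: "('q \<Rightarrow> nat) \<Rightarrow> bool" where
  "colours_ok Omega \<longleftrightarrow> (\<exists>q. even (Omega q)) \<and> (\<exists>q. odd (Omega q))"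

definition is_fin_run :: "('q \<Rightarrow> 'a \<Rightarrow> 'q) \<Rightarrow> ('q,'a) trans list \<Rightarrow> bool" where
  "is_fin_run delta ts \<longleftrightarrow> ts \<noteq> [] \<and> (\<forall>t\<in>set ts. is_trans delta t) \<and>
     (\<forall>i. Suc i < length ts \<longrightarrow> tgt (ts ! i) = src (ts ! Suc i))"

definition is_inf_run :: "('q \<Rightarrow> 'a \<Rightarrow> 'q) \<Rightarrow> (nat \<Rightarrow> ('q,'a) trans) \<Rightarrow> bool" where
  "is_inf_run delta r \<longleftrightarrow> (\<forall>n. is_trans delta (r n)) \<and> (\<forall>n. tgt (r n) = src (r (Suc n)))"

definition start_pos :: "(nat \<Rightarrow> 'b list) \<Rightarrow> nat \<Rightarrow> nat" where
  "start_pos xs j = (\<Sum>i<j. length (xs i))"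

definition concat_inf :: "(nat \<Rightarrow> 'b list) \<Rightarrow> nat \<Rightarrow> 'b" where
  "concat_inf xs n = (let j = (LEAST j. n < start_pos xs (Suc j)) in xs j ! (n - start_pos xs j))"

definition Ans :: "('q \<Rightarrow> nat) \<Rightarrow> nat \<Rightarrow> nat set" where
  "Ans Omega c = {c'. c' \<in> range Omega \<and> c' > c \<and> even c'}"

definition st :: "(nat \<Rightarrow> ('q,'a) trans) \<Rightarrow> nat \<Rightarrow> 'q" where
  "st r n = src (r n)"

definition seg_cost :: "('q \<Rightarrow> 'a \<Rightarrow> cost) \<Rightarrow> (nat \<Rightarrow> ('q,'a) trans) \<Rightarrow> nat \<Rightarrow> nat \<Rightarrow> nat" where
  "seg_cost Cst r n n' = card {k. n \<le> k \<and> k < n' \<and> is_incr Cst (r k)}"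

definition Cor :: "('q \<Rightarrow> nat) \<Rightarrow> ('q \<Rightarrow> 'a \<Rightarrow> cost) \<Rightarrow> (nat \<Rightarrow> ('q,'a) trans) \<Rightarrow> nat \<Rightarrow> enat" where
  "Cor Omega Cst r n =
     (if even (Omega (st r n)) then 0
      else Inf {enat (seg_cost Cst r n n') | n'. n' > n \<and> Omega (st r n') \<in> Ans Omega (Omega (st r n))})"

definition accepting :: "('q \<Rightarrow> nat) \<Rightarrow> ('q \<Rightarrow> 'a \<Rightarrow> cost) \<Rightarrow> (nat \<Rightarrow> ('q,'a) trans) \<Rightarrow> bool" where
  "accepting Omega Cst r \<longleftrightarrow> limsup (Cor Omega Cst r) < \<infinity>"

text \<open>Types of non-empty finite runs; None plays the role of bottom.\<close>
definition fstates :: "('q,'a) trans list \<Rightarrow> 'q list" where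
  "fstates ts = src (hd ts) # map tgt ts"

definition max_opt :: "nat set \<Rightarrow> nat option" where
  "max_opt S = (if S = {} then None else Some (Max S))"

definition run_type :: "('q \<Rightarrow> nat) \<Rightarrow> ('q \<Rightarrow> 'a \<Rightarrow> cost) \<Rightarrow> ('q,'a) trans list
    \<Rightarrow> 'q \<times> 'q \<times> nat option \<times> nat option \<times> cost" where
  "run_type Omega Cst ts =
    (let qs = fstates ts; n = length ts in
     (qs ! 0, qs ! n,
      max_opt {Omega (qs ! j) | j. j \<le> n \<and> even (Omega (qs ! j))},
      max_opt {Omega (qs ! j) | j. j \<le> n \<and> odd (Omega (qs ! j)) \<and>
                 (\<forall>j'. j < j' \<and> j' \<le> n \<longrightarrow> Omega (qs ! j') \<notin> Ans Omega (Omega (qs ! j)))},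
      (if \<exists>t\<in>set ts. is_incr Cst t then Inc else Eps)))"

end

theory Submission
  imports Defs
begin

text \<open>Both runs are cut into their blocks. Take a late position n of the second run, in block j,
  with an odd colour c. If c is answered inside block j, the cost of answering it is at most d.
  Otherwise the equal types give an unanswered request y \<ge> c in block j of the first run; past
  the threshold the first run answers y at cost at most b in some later block j', and the maximal
  even colour of block j' of the second run, which is at least that answer, then answers c. Every
  block strictly between j and j' containing an increment costs the first run at least one
  increment, and every block of the second run contains at most d increments, so together with
  the blocks j and j' the second run answers c at cost at most (b + 2) d.\<close>

section \<open>Blocks of an infinite concatenation\<close>

lemma start_pos_Suc: "start_pos xs (Suc j) = start_pos xs j + length (xs j)"
  by (simp add: start_pos_def)

lemma start_pos_mono: "a \<le> b \<Longrightarrow> start_pos xs a \<le> start_pos xs b"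
  by (induction b) (auto simp: start_pos_Suc le_Suc_eq)

lemma le_start_pos:
  assumes "\<And>j. xs j \<noteq> []"
  shows "j \<le> start_pos xs j"
proof (induction j)
  case (Suc j)
  have "length (xs j) > 0" using assms by simp
  with Suc show ?case by (simp add: start_pos_Suc del: length_greater_0_conv)
qed simp

lemma le_block_index:
  assumes "i < length (xs m)" "start_pos xs j \<le> start_pos xs m + i"
  shows "j \<le> m"
proof (rule ccontr)
  assume "\<not> j \<le> m"
  then have "start_pos xs (Suc m) \<le> start_pos xs j" by (intro start_pos_mono) simp
  with assms show False by (simp add: start_pos_Suc)
qed

lemma block_index_le:
  assumes "start_pos xs m + i < start_pos xs (Suc j)"
  shows "m \<le> j"
proof (rule ccontr)
  assume "\<not> m \<le> j"
  then have "start_pos xs (Suc j) \<le> start_pos xs m" by (intro start_pos_mono) simp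
  with assms show False by simp
qed

lemma concat_inf_start_pos:
  assumes "i < length (xs j)"
  shows "concat_inf xs (start_pos xs j + i) = xs j ! i"
proof -
  have "(LEAST j'. start_pos xs j + i < start_pos xs (Suc j')) = j"
    using assms by (intro Least_equality) (auto simp: start_pos_Suc intro: block_index_le)
  then show ?thesis by (simp add: concat_inf_def)
qed

lemma ex_block_index:
  assumes "\<And>j. xs j \<noteq> []"
  obtains j i where "i < length (xs j)" "n = start_pos xs j + i"
proof -
  have "n < start_pos xs (Suc n)" using le_start_pos[of xs "Suc n"] assms by simp
  then obtain j where "\<not> n < start_pos xs j" "n < start_pos xs (Suc j)"
    using ex_least_nat_less[of "\<lambda>j. n < start_pos xs j" "Suc n"] by (auto simp: start_pos_def)
  then show ?thesis by (intro that[of "n - start_pos xs j" j]) (auto simp: start_pos_Suc)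
qed

lemma fstates_nth_less:
  assumes "is_fin_run delta ts" "i < length ts"
  shows "fstates ts ! i = src (ts ! i)"
proof (cases i)
  case 0
  then show ?thesis using assms by (cases ts) (auto simp: fstates_def is_fin_run_def)
next
  case (Suc k)
  then show ?thesis using assms unfolding is_fin_run_def by (simp add: fstates_def)
qed

lemma fstates_nth_length:
  "ts \<noteq> [] \<Longrightarrow> fstates ts ! length ts = tgt (ts ! (length ts - 1))"
  by (cases ts) (auto simp: fstates_def nth_Cons split: nat.splits)

lemma fstates_linked_if_concat_inf_run:
  assumes "\<And>j. is_fin_run delta (xs j)" "is_inf_run delta (concat_inf xs)"
  shows "fstates (xs j) ! length (xs j) = fstates (xs (Suc j)) ! 0"
proof -
  define L where "L = length (xs j)"
  have ne: "xs j' \<noteq> []" for j' using assms(1) by (simp add: is_fin_run_def)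
  then have L: "0 < L" by (simp add: L_def)
  have last: "concat_inf xs (start_pos xs j + (L - 1)) = xs j ! (L - 1)"
    using L by (intro concat_inf_start_pos) (simp add: L_def)
  have "Suc (start_pos xs j + (L - 1)) = start_pos xs (Suc j) + 0"
    using L by (simp add: start_pos_Suc L_def)
  then have next_first: "concat_inf xs (Suc (start_pos xs j + (L - 1))) = xs (Suc j) ! 0"
    using concat_inf_start_pos[of 0 xs "Suc j"] ne by simp
  have "tgt (xs j ! (L - 1)) = src (xs (Suc j) ! 0)"
    using assms(2) last next_first unfolding is_inf_run_def by metis
  then show ?thesis
    using fstates_nth_length[OF ne] fstates_nth_less[OF assms(1), of 0 "Suc j"] ne
    by (simp add: L_def)
qed

lemma st_concat_inf:
  assumes "\<And>j. is_fin_run delta (xs j)"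
    and "\<And>j. fstates (xs j) ! length (xs j) = fstates (xs (Suc j)) ! 0"
    and "i \<le> length (xs j)"
  shows "st (concat_inf xs) (start_pos xs j + i) = fstates (xs j) ! i"
proof (cases "i < length (xs j)")
  case True
  then show ?thesis
    using concat_inf_start_pos[of i xs j, OF True] fstates_nth_less[OF assms(1) True]
    by (simp add: st_def)
next
  case False
  then have i: "i = length (xs j)" using assms(3) by simp
  have ne: "xs (Suc j) \<noteq> []" using assms(1) by (simp add: is_fin_run_def)
  have "st (concat_inf xs) (start_pos xs j + i) = st (concat_inf xs) (start_pos xs (Suc j) + 0)"
    using i by (simp add: start_pos_Suc)
  also have "\<dots> = fstates (xs (Suc j)) ! 0"
    using concat_inf_start_pos[of 0 xs "Suc j"] fstates_nth_less[OF assms(1), of 0 "Suc j"] ne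
    by (simp add: st_def)
  finally show ?thesis using assms(2) i by simp
qed

section \<open>Costs of segments\<close>

definition has_incr :: "('q \<Rightarrow> 'a \<Rightarrow> cost) \<Rightarrow> ('q,'a) trans list \<Rightarrow> bool" where
  "has_incr Cst ts \<longleftrightarrow> (\<exists>t\<in>set ts. is_incr Cst t)"

lemma seg_cost_le_diff: "seg_cost Cst r n n' \<le> n' - n"
proof -
  have "seg_cost Cst r n n' \<le> card {n..<n'}"
    unfolding seg_cost_def by (intro card_mono) auto
  then show ?thesis by simp
qed

lemma seg_cost_concat_inf_le:
  assumes ne: "\<And>j. xs j \<noteq> []" and len: "\<And>j. length (xs j) \<le> d"
    and "start_pos xs j \<le> n" "n' \<le> start_pos xs (Suc j')"
  shows "seg_cost Cst (concat_inf xs) n n' \<le> d * card {m. j \<le> m \<and> m \<le> j' \<and> has_incr Cst (xs m)}"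
proof -
  define M where "M = {m. j \<le> m \<and> m \<le> j' \<and> has_incr Cst (xs m)}"
  define block where "block m = {start_pos xs m ..< start_pos xs (Suc m)}" for m
  have fin: "finite M" unfolding M_def by (rule finite_subset[of _ "{..j'}"]) auto
  have "{k. n \<le> k \<and> k < n' \<and> is_incr Cst (concat_inf xs k)} \<subseteq> (\<Union>m\<in>M. block m)"
  proof
    fix k assume k: "k \<in> {k. n \<le> k \<and> k < n' \<and> is_incr Cst (concat_inf xs k)}"
    obtain m i where mi: "i < length (xs m)" "k = start_pos xs m + i"
      using ex_block_index[where n = k, OF ne] .
    have "j \<le> m" using le_block_index[of i xs m j] k mi assms(3) by simp
    moreover have "m \<le> j'" using block_index_le[of xs m i j'] k mi assms(4) by simp
    moreover have "has_incr Cst (xs m)"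
      using k mi concat_inf_start_pos[of i xs m] nth_mem[of i "xs m"] unfolding has_incr_def by auto
    moreover have "k \<in> block m" using mi by (simp add: block_def start_pos_Suc)
    ultimately show "k \<in> (\<Union>m\<in>M. block m)" unfolding M_def by blast
  qed
  then have "seg_cost Cst (concat_inf xs) n n' \<le> card (\<Union>m\<in>M. block m)"
    unfolding seg_cost_def using fin by (simp add: block_def card_mono)
  also have "\<dots> \<le> (\<Sum>m\<in>M. card (block m))" by (rule card_UN_le[OF fin])
  also have "\<dots> \<le> (\<Sum>m\<in>M. d)" using len by (intro sum_mono) (simp add: block_def start_pos_Suc)
  finally show ?thesis unfolding M_def by (simp add: mult.commute)
qed

lemma card_incr_blocks_le_seg_cost:
  assumes "P \<le> start_pos xs (Suc j)" "start_pos xs j' \<le> P'"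
  shows "card {m. j < m \<and> m < j' \<and> has_incr Cst (xs m)} \<le> seg_cost Cst (concat_inf xs) P P'"
proof -
  define M where "M = {m. j < m \<and> m < j' \<and> has_incr Cst (xs m)}"
  have "\<forall>m\<in>M. \<exists>i. i < length (xs m) \<and> is_incr Cst (xs m ! i)"
    unfolding M_def has_incr_def Bex_def in_set_conv_nth by blast
  then obtain pos where pos: "\<And>m. m \<in> M \<Longrightarrow> pos m < length (xs m) \<and> is_incr Cst (xs m ! pos m)"
    by metis
  define f where "f m = start_pos xs m + pos m" for m
  have "inj_on f M"
  proof (rule inj_onI)
    fix m1 m2 assume m: "m1 \<in> M" "m2 \<in> M" "f m1 = f m2"
    have "m1 \<le> m2"
      using m pos[of m2] by (intro le_block_index[of "pos m2" xs m2]) (simp_all add: f_def)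
    moreover have "m2 \<le> m1"
      using m pos[of m1] by (intro le_block_index[of "pos m1" xs m1]) (simp_all add: f_def)
    ultimately show "m1 = m2" by simp
  qed
  moreover have "f ` M \<subseteq> {k. P \<le> k \<and> k < P' \<and> is_incr Cst (concat_inf xs k)}"
  proof
    fix k assume "k \<in> f ` M"
    then obtain m where m: "m \<in> M" "k = f m" by blast
    have "P \<le> start_pos xs m"
      using m(1) assms(1) start_pos_mono[of "Suc j" m xs] unfolding M_def by simp
    moreover have "f m < start_pos xs j'"
      using m(1) pos[of m] start_pos_mono[of "Suc m" j' xs] unfolding M_def f_def
      by (simp add: start_pos_Suc)
    moreover have "is_incr Cst (concat_inf xs (f m))"
      using pos[OF m(1)] concat_inf_start_pos[of "pos m" xs m] unfolding f_def by simp
    ultimately show "k \<in> {k. P \<le> k \<and> k < P' \<and> is_incr Cst (concat_inf xs k)}"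
      using m(2) assms(2) unfolding f_def by simp
  qed
  moreover have "finite {k. P \<le> k \<and> k < P' \<and> is_incr Cst (concat_inf xs k)}" by simp
  ultimately show ?thesis unfolding M_def seg_cost_def by (rule card_inj_on_le)
qed

lemma card_closed_interval_le:
  "card {m::nat. j \<le> m \<and> m \<le> j' \<and> Q m} \<le> card {m. j < m \<and> m < j' \<and> Q m} + 2"
proof -
  define X where "X = {m. j < m \<and> m < j' \<and> Q m}"
  have fin: "finite X" unfolding X_def by (rule finite_subset[of _ "{..<j'}"]) auto
  have "card {m::nat. j \<le> m \<and> m \<le> j' \<and> Q m} \<le> card (insert j (insert j' X))"
    using fin unfolding X_def by (intro card_mono) auto
  also have "\<dots> \<le> card X + 2" using fin by (simp add: card_insert_if)
  finally show ?thesis unfolding X_def .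
qed

lemma Cor_le_seg_cost:
  assumes "n < n'" "Omega (st r n') \<in> Ans Omega (Omega (st r n))"
  shows "Cor Omega Cst r n \<le> enat (seg_cost Cst r n n')"
proof -
  have "enat (seg_cost Cst r n n') \<in> {enat (seg_cost Cst r n n'') | n''. n'' > n \<and>
      Omega (st r n'') \<in> Ans Omega (Omega (st r n))}"
    using assms by blast
  then show ?thesis unfolding Cor_def by (simp add: Inf_lower)
qed

lemma Cor_le_enatE:
  assumes "odd (Omega (st r n))" "Cor Omega Cst r n \<le> enat b"
  obtains n' where "n < n'" "Omega (st r n') \<in> Ans Omega (Omega (st r n))"
    "seg_cost Cst r n n' \<le> b"
proof -
  have "Inf {enat (seg_cost Cst r n n') | n'. n' > n \<and> Omega (st r n') \<in> Ans Omega (Omega (st r n))}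
      < enat (Suc b)"
    using assms le_less_trans[OF assms(2)] unfolding Cor_def by simp
  then obtain n' where "n < n'" "Omega (st r n') \<in> Ans Omega (Omega (st r n))"
      "enat (seg_cost Cst r n n') < enat (Suc b)"
    unfolding Inf_less_iff by blast
  with that show ?thesis by simp
qed

section \<open>Types of finite runs\<close>

definition even_colours :: "('q \<Rightarrow> nat) \<Rightarrow> ('q,'a) trans list \<Rightarrow> nat set" where
  "even_colours Omega ts =
    {Omega (fstates ts ! j) | j. j \<le> length ts \<and> even (Omega (fstates ts ! j))}"

definition unanswered_requests :: "('q \<Rightarrow> nat) \<Rightarrow> ('q,'a) trans list \<Rightarrow> nat set" where
  "unanswered_requests Omega ts =
    {Omega (fstates ts ! j) | j. j \<le> length ts \<and> odd (Omega (fstates ts ! j)) \<and>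
      (\<forall>j'. j < j' \<and> j' \<le> length ts \<longrightarrow>
         Omega (fstates ts ! j') \<notin> Ans Omega (Omega (fstates ts ! j)))}"

lemma run_type_eq:
  "run_type Omega Cst ts = (fstates ts ! 0, fstates ts ! length ts, max_opt (even_colours Omega ts),
      max_opt (unanswered_requests Omega ts), if has_incr Cst ts then Inc else Eps)"
  by (simp add: run_type_def Let_def even_colours_def unanswered_requests_def has_incr_def)

lemma finite_even_colours: "finite (even_colours Omega ts)"
  by (rule finite_subset[of _ "(\<lambda>j. Omega (fstates ts ! j)) ` {..length ts}"])
    (auto simp: even_colours_def)

lemma finite_unanswered_requests: "finite (unanswered_requests Omega ts)"
  by (rule finite_subset[of _ "(\<lambda>j. Omega (fstates ts ! j)) ` {..length ts}"])
    (auto simp: unanswered_requests_def)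

lemma max_opt_eq_ex_ge:
  assumes "finite A" "finite B" "max_opt A = max_opt B" "x \<in> A"
  obtains y where "y \<in> B" "x \<le> y"
proof -
  have "A \<noteq> {}" using assms by auto
  with assms(3) have "B \<noteq> {}" "Max A = Max B" unfolding max_opt_def by (auto split: if_splits)
  with assms that show ?thesis by (metis Max_ge Max_in)
qed

lemma Limsup_le_enat_eventually:
  fixes f :: "_ \<Rightarrow> enat"
  assumes "Limsup F f \<le> enat b"
  shows "eventually (\<lambda>x. f x \<le> enat b) F"
proof -
  have "Limsup F f < enat (Suc b)" using assms by (simp add: le_less_trans)
  then have "eventually (\<lambda>x. f x < enat (Suc b)) F" by (rule Limsup_lessD)
  then show ?thesis by eventually_elim (metis eSuc_enat eSuc_ile_mono ileI1)
qed

section \<open>Runs assembled from blocks of equal types\<close>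

locale same_type_blocks =
  fixes delta :: "'q \<Rightarrow> 'a \<Rightarrow> 'q"
    and Omega :: "'q \<Rightarrow> nat"
    and Cst :: "'q \<Rightarrow> 'a \<Rightarrow> cost"
    and r1 r2 :: "nat \<Rightarrow> ('q,'a) trans list"
    and d :: nat
  assumes fin_run1: "is_fin_run delta (r1 j)"
    and fin_run2: "is_fin_run delta (r2 j)"
    and same_type: "run_type Omega Cst (r1 j) = run_type Omega Cst (r2 j)"
    and length_r2_le: "length (r2 j) \<le> d"
    and inf_run1: "is_inf_run delta (concat_inf r1)"
begin

lemma r1_nonempty: "r1 j \<noteq> []" and r2_nonempty: "r2 j \<noteq> []"
  using fin_run1 fin_run2 by (simp_all add: is_fin_run_def)

lemma max_opt_even_colours_eq:
  "max_opt (even_colours Omega (r1 j)) = max_opt (even_colours Omega (r2 j))"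
  using same_type[of j] by (simp add: run_type_eq)

lemma max_opt_unanswered_requests_eq:
  "max_opt (unanswered_requests Omega (r1 j)) = max_opt (unanswered_requests Omega (r2 j))"
  using same_type[of j] by (simp add: run_type_eq)

lemma has_incr_eq: "has_incr Cst (r1 j) = has_incr Cst (r2 j)"
  using same_type[of j] by (simp add: run_type_eq split: if_splits)

lemma st_concat_inf1:
  "i \<le> length (r1 j) \<Longrightarrow> st (concat_inf r1) (start_pos r1 j + i) = fstates (r1 j) ! i"
  using st_concat_inf[where xs = r1, OF fin_run1
      fstates_linked_if_concat_inf_run[OF fin_run1 inf_run1]] .

lemma st_concat_inf2:
  "i \<le> length (r2 j) \<Longrightarrow> st (concat_inf r2) (start_pos r2 j + i) = fstates (r2 j) ! i"
proof (rule st_concat_inf[OF fin_run2])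
  fix j
  show "fstates (r2 j) ! length (r2 j) = fstates (r2 (Suc j)) ! 0"
    using fstates_linked_if_concat_inf_run[OF fin_run1 inf_run1, of j] same_type[of j]
      same_type[of "Suc j"]
    by (simp add: run_type_eq)
qed

lemma request_answered_in_later_block:
  assumes "\<forall>m\<ge>N. Cor Omega Cst (concat_inf r1) m \<le> enat b" "N \<le> j"
    and "y \<in> unanswered_requests Omega (r1 j)"
  obtains j' e where "j < j'" "e \<in> even_colours Omega (r1 j')" "y < e"
    "card {m. j < m \<and> m < j' \<and> has_incr Cst (r1 m)} \<le> b"
proof -
  from assms(3) obtain p where p: "p \<le> length (r1 j)" "y = Omega (fstates (r1 j) ! p)" "odd y"
    "\<And>p'. p < p' \<Longrightarrow> p' \<le> length (r1 j) \<Longrightarrow> Omega (fstates (r1 j) ! p') \<notin> Ans Omega y"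
    unfolding unanswered_requests_def by blast
  define P where "P = start_pos r1 j + p"
  have st_P: "st (concat_inf r1) P = fstates (r1 j) ! p" using st_concat_inf1 p(1) P_def by simp
  have "N \<le> P" using assms(2) le_start_pos[of r1 j] r1_nonempty unfolding P_def by fastforce
  then have "Cor Omega Cst (concat_inf r1) P \<le> enat b" using assms(1) by simp
  then obtain P' where P': "P < P'" "Omega (st (concat_inf r1) P') \<in> Ans Omega y"
      "seg_cost Cst (concat_inf r1) P P' \<le> b"
    using Cor_le_enatE[of Omega "concat_inf r1" P] st_P p(2,3) by metis
  obtain j' i where ji: "i < length (r1 j')" "P' = start_pos r1 j' + i"
    using ex_block_index[where n = P', OF r1_nonempty] .
  have st_P': "st (concat_inf r1) P' = fstates (r1 j') ! i" using st_concat_inf1[of i j'] ji by simp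
  have "j \<le> j'" using le_block_index[of i r1 j' j] ji P' P_def by simp
  moreover have "j \<noteq> j'"
  proof
    assume "j = j'"
    then show False using p(4)[of i] P' P_def ji st_P' by simp
  qed
  ultimately have "j < j'" by simp
  moreover have "Omega (st (concat_inf r1) P') \<in> even_colours Omega (r1 j')"
    using P'(2) ji(1) st_P' unfolding even_colours_def Ans_def by (auto intro!: exI[of _ i])
  moreover have "y < Omega (st (concat_inf r1) P')" using P'(2) by (simp add: Ans_def)
  moreover have "card {m. j < m \<and> m < j' \<and> has_incr Cst (r1 m)}
      \<le> seg_cost Cst (concat_inf r1) P P'"
    using p(1) ji by (intro card_incr_blocks_le_seg_cost) (simp_all add: P_def start_pos_Suc)
  ultimately show ?thesis using that P'(3) by (meson order_trans)
qed

lemma seg_cost_concat_inf2_le: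
  assumes "k \<le> length (r2 j')"
  shows "seg_cost Cst (concat_inf r2) (start_pos r2 j + i) (start_pos r2 j' + k)
    \<le> d * (card {m. j < m \<and> m < j' \<and> has_incr Cst (r1 m)} + 2)"
proof -
  have "seg_cost Cst (concat_inf r2) (start_pos r2 j + i) (start_pos r2 j' + k)
      \<le> d * card {m. j \<le> m \<and> m \<le> j' \<and> has_incr Cst (r2 m)}"
    using assms by (intro seg_cost_concat_inf_le[OF r2_nonempty length_r2_le])
      (simp_all add: start_pos_Suc)
  also have "{m. j \<le> m \<and> m \<le> j' \<and> has_incr Cst (r2 m)}
      = {m. j \<le> m \<and> m \<le> j' \<and> has_incr Cst (r1 m)}"
    using has_incr_eq by simp
  also have "d * card \<dots> \<le> d * (card {m. j < m \<and> m < j' \<and> has_incr Cst (r1 m)} + 2)"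
    by (intro mult_le_mono2 card_closed_interval_le)
  finally show ?thesis .
qed

lemma Cor_concat_inf2_le_if_unanswered:
  assumes Cor1: "\<forall>m\<ge>N. Cor Omega Cst (concat_inf r1) m \<le> enat b" and "N \<le> j"
    and "i < length (r2 j)" and c: "Omega (fstates (r2 j) ! i) \<in> unanswered_requests Omega (r2 j)"
  shows "Cor Omega Cst (concat_inf r2) (start_pos r2 j + i) \<le> enat ((b + 2) * d)"
proof -
  define c where "c = Omega (fstates (r2 j) ! i)"
  define n where "n = start_pos r2 j + i"
  obtain y where y: "y \<in> unanswered_requests Omega (r1 j)" "c \<le> y"
    using max_opt_eq_ex_ge[OF finite_unanswered_requests finite_unanswered_requests
        max_opt_unanswered_requests_eq[symmetric] c] unfolding c_def .
  obtain j' e where j': "j < j'" "e \<in> even_colours Omega (r1 j')" "y < e"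
      "card {m. j < m \<and> m < j' \<and> has_incr Cst (r1 m)} \<le> b"
    using request_answered_in_later_block[OF Cor1 \<open>N \<le> j\<close> y(1)] .
  obtain y' where "y' \<in> even_colours Omega (r2 j')" "e \<le> y'"
    using max_opt_eq_ex_ge[OF finite_even_colours finite_even_colours
        max_opt_even_colours_eq j'(2)] .
  then obtain k where k: "k \<le> length (r2 j')" "y' = Omega (fstates (r2 j') ! k)" "even y'"
    unfolding even_colours_def by auto
  have "start_pos r2 (Suc j) \<le> start_pos r2 j'" using j'(1) by (intro start_pos_mono) simp
  then have "n < start_pos r2 j' + k" using assms(3) by (simp add: n_def start_pos_Suc)
  moreover have "y' \<in> Ans Omega c" using k y j' \<open>e \<le> y'\<close> unfolding Ans_def by auto
  ultimately have "Cor Omega Cst (concat_inf r2) n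
      \<le> enat (seg_cost Cst (concat_inf r2) n (start_pos r2 j' + k))"
    using st_concat_inf2[of i j] st_concat_inf2[OF k(1)] k(2) assms(3)
    by (intro Cor_le_seg_cost) (simp_all add: c_def n_def)
  also have "seg_cost Cst (concat_inf r2) n (start_pos r2 j' + k)
      \<le> d * (card {m. j < m \<and> m < j' \<and> has_incr Cst (r1 m)} + 2)"
    unfolding n_def by (rule seg_cost_concat_inf2_le[OF k(1)])
  also have "\<dots> \<le> d * (b + 2)" using j'(4) by simp
  finally show ?thesis by (simp add: n_def mult.commute)
qed

lemma Cor_concat_inf2_le:
  assumes Cor1: "\<forall>m\<ge>N. Cor Omega Cst (concat_inf r1) m \<le> enat b" and "start_pos r2 N \<le> n"
  shows "Cor Omega Cst (concat_inf r2) n \<le> enat ((b + 2) * d)"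
proof -
  obtain j i where ji: "i < length (r2 j)" "n = start_pos r2 j + i"
    using ex_block_index[where n = n, OF r2_nonempty] .
  have "N \<le> j" using le_block_index[of i r2 j N] ji assms(2) by simp
  define c where "c = Omega (fstates (r2 j) ! i)"
  have st_n: "st (concat_inf r2) n = fstates (r2 j) ! i" using st_concat_inf2 ji by simp
  have "c \<in> unanswered_requests Omega (r2 j)"
    if "odd c"
      and "\<nexists>i'. i < i' \<and> i' \<le> length (r2 j) \<and> Omega (fstates (r2 j) ! i') \<in> Ans Omega c"
    unfolding unanswered_requests_def
    by (intro CollectI exI[of _ i]) (use that ji(1) in \<open>auto simp: c_def\<close>)
  then consider (even) "even c"
    | (answered) i' where "i < i'" "i' \<le> length (r2 j)"
        "Omega (fstates (r2 j) ! i') \<in> Ans Omega c"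
    | (unanswered) "c \<in> unanswered_requests Omega (r2 j)"
    by blast
  then show ?thesis
  proof cases
    case even
    then show ?thesis using st_n by (simp add: Cor_def c_def)
  next
    case answered
    then have "Cor Omega Cst (concat_inf r2) n
        \<le> enat (seg_cost Cst (concat_inf r2) n (start_pos r2 j + i'))"
      using st_n st_concat_inf2[of i' j] ji by (intro Cor_le_seg_cost) (simp_all add: c_def)
    also have "seg_cost Cst (concat_inf r2) n (start_pos r2 j + i') \<le> i' - i"
      using seg_cost_le_diff[of Cst "concat_inf r2" n "start_pos r2 j + i'"] ji(2) by simp
    also have "i' - i \<le> d" using answered(2) length_r2_le[of j] by simp
    finally show ?thesis by (simp add: order_trans)
  next
    case unanswered
    then show ?thesis
      using Cor_concat_inf2_le_if_unanswered[OF Cor1 \<open>N \<le> j\<close> ji(1)] ji(2)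
      by (simp add: c_def)
  qed
qed

lemma limsup_Cor_concat_inf2_le:
  assumes "limsup (Cor Omega Cst (concat_inf r1)) \<le> enat b"
  shows "limsup (Cor Omega Cst (concat_inf r2)) \<le> enat ((b + 2) * d)"
proof (rule Limsup_bounded)
  obtain N where N: "\<forall>m\<ge>N. Cor Omega Cst (concat_inf r1) m \<le> enat b"
    using Limsup_le_enat_eventually[OF assms] unfolding eventually_sequentially by blast
  have "Cor Omega Cst (concat_inf r2) n \<le> enat ((b + 2) * d)" if "start_pos r2 N \<le> n" for n
    using Cor_concat_inf2_le[OF N that] .
  then show "\<forall>\<^sub>F n in sequentially. Cor Omega Cst (concat_inf r2) n \<le> enat ((b + 2) * d)"
    unfolding eventually_sequentially by blast
qed

lemma accepting_concat_inf2:
  assumes "accepting Omega Cst (concat_inf r1)"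
  shows "accepting Omega Cst (concat_inf r2)"
proof -
  obtain b where "limsup (Cor Omega Cst (concat_inf r1)) = enat b"
    using assms unfolding accepting_def by (cases "limsup (Cor Omega Cst (concat_inf r1))") auto
  then have "limsup (Cor Omega Cst (concat_inf r2)) \<le> enat ((b + 2) * d)"
    by (intro limsup_Cor_concat_inf2_le) simp
  then show ?thesis unfolding accepting_def using le_less_trans by fastforce
qed

end

theorem lemma1:
  fixes delta :: "'q::finite \<Rightarrow> 'a::finite \<Rightarrow> 'q"
    and Omega :: "'q \<Rightarrow> nat"
    and Cst :: "'q \<Rightarrow> 'a \<Rightarrow> cost"
    and r1 r2 :: "nat \<Rightarrow> ('q,'a) trans list"
    and d b :: nat
  assumes "colours_ok Omega"
    and "\<And>j. is_fin_run delta (r1 j)"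
    and "\<And>j. is_fin_run delta (r2 j)"
    and "\<And>j. run_type Omega Cst (r1 j) = run_type Omega Cst (r2 j)"
    and "(SUP j. enat (length (r2 j))) = enat d"
    and "is_inf_run delta (concat_inf r1)"
  shows "(limsup (Cor Omega Cst (concat_inf r1)) \<le> enat b \<longrightarrow>
            limsup (Cor Omega Cst (concat_inf r2)) \<le> enat ((b + 2) * d))
       \<and> (accepting Omega Cst (concat_inf r1) \<longrightarrow> accepting Omega Cst (concat_inf r2))"
proof -
  have "length (r2 j) \<le> d" for j
    using SUP_upper[of j UNIV "\<lambda>j. enat (length (r2 j))"] assms(5) by simp
  then interpret same_type_blocks delta Omega Cst r1 r2 d
    using assms(2-4,6) by unfold_locales
  show ?thesis using limsup_Cor_concat_inf2_le accepting_concat_inf2 by blast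
qed

end
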